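(* Let $Q \ll P$ be probability measures on a Polish space $\Omega$, $r = dQ/dP$, and let $f \in \mathcal{F}$ be such that $0 < D_f(Q\|P) < \infty$. Let $\epsilon > 0$ and $\gamma \in (0,1)$. Let $M > 0$ be such that $\widetilde{M} := M / W_P(M)$ satisfies $f'(\widetilde{M}) = D_f(Q\|P)/(\gamma\epsilon)$, and let $k$ be a positive integer with $k \ge \widetilde{M} \ln\!\big(1/((1-\gamma)\epsilon)\big)$. Consider the following budgeted rejection sampler: let $X_1, X_2, \dots$ be i.i.d. $P$-distributed, $U_1, U_2, \dots$ i.i.d. uniform on $[0,1]$ and independent of the $X_i$; let $K = \min\{i \ge 1 : U_i \le r_M(X_i)/\widetilde{M}\}$ where $r_M(x) = (r(x) \wedge M)/W_P(M)$; if $K \le k$ output $X_K$, and otherwise output one of $X_1, \dots, X_k$ chosen uniformly at random (independently of everything else). Then the law $\widetilde{Q}$ of the output satisfies $D_{TV}(\widetilde{Q}, Q) \le \epsilon$. In particular a sample complexity of $\ln\!\big(\tfrac{1}{(1-\gamma)\epsilon}\big)\,(f')^{-1}\!\big(\tfrac{D_f(Q\|P)}{\gamma\epsilon}\big)$ suffices.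
   Context: $a \wedge b = \min\{a,b\}$. $\mathcal{F}$ is the set of convex functions $f : [0,\infty) \to \mathbb{R}_{\ge 0} \cup \{\infty\}$ with $f(1) = 0$ and $f'(1) = 0$ (assumed differentiable). For $f \in \mathcal{F}$, the $f$-divergence is $D_f(Q\|P) = \mathbb{E}_{X \sim P}[f(r(X))]$. Define $w_P(h) = \mathbb{P}_{X \sim P}[r(X) \ge h]$ and $W_P(h) = \int_0^h w_P(\eta)\,d\eta$ (equivalently $W_P(h) = \mathbb{E}_{X\sim P}[r(X) \wedge h]$). The total variation distance is $D_{TV}(Q, P) = \sup_B |Q(B) - P(B)|$. The measure $Q_M$ with $dQ_M/dP = r_M$ is a probability measure and $r_M \le \widetilde{M}$. *)

theory Defs
  imports "HOL-Probability.Probability"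
begin

definition ext_convex_nonneg :: "(real \<Rightarrow> ereal) \<Rightarrow> bool" where
  "ext_convex_nonneg f \<longleftrightarrow>
     (\<forall>x\<ge>0. \<forall>y\<ge>0. \<forall>t::real. 0 \<le> t \<and> t \<le> 1 \<longrightarrow>
        f ((1 - t) * x + t * y) \<le> ereal (1 - t) * f x + ereal t * f y)"

definition fdiv :: "'a measure \<Rightarrow> (real \<Rightarrow> ereal) \<Rightarrow> ('a \<Rightarrow> real) \<Rightarrow> ennreal" where
  "fdiv P f r = (\<integral>\<^sup>+ x. e2ennreal (f (r x)) \<partial>P)"

definition Wfun :: "'a measure \<Rightarrow> ('a \<Rightarrow> real) \<Rightarrow> real \<Rightarrow> real" where
  "Wfun P r h = (\<integral> x. min (r x) h \<partial>P)"

definition tv_dist :: "'a measure \<Rightarrow> 'a measure \<Rightarrow> real" where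
  "tv_dist Q P = (SUP B \<in> sets P. \<bar>measure Q B - measure P B\<bar>)"

definition rM :: "'a measure \<Rightarrow> ('a \<Rightarrow> real) \<Rightarrow> real \<Rightarrow> 'a \<Rightarrow> real" where
  "rM P r M x = min (r x) M / Wfun P r M"

definition Mtilde :: "'a measure \<Rightarrow> ('a \<Rightarrow> real) \<Rightarrow> real \<Rightarrow> real" where
  "Mtilde P r M = M / Wfun P r M"

text \<open>The outcome is a pair of an
  infinite sequence ((X_0,U_0),(X_1,U_1),...) (0-indexed) and an index j in {0..<k}
  (the uniform fallback choice). Index i is accepted iff U_i <= r_M(X_i)/M tilde;
  K <= k iff some index i < k is accepted.\<close>
definition brs_out :: "'a measure \<Rightarrow> ('a \<Rightarrow> real) \<Rightarrow> real \<Rightarrow> nat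
                        \<Rightarrow> (nat \<Rightarrow> 'a \<times> real) \<times> nat \<Rightarrow> 'a" where
  "brs_out P r M k \<omega> =
     (let xs = fst \<omega>; j = snd \<omega>;
          acc = (\<lambda>i. snd (xs i) \<le> rM P r M (fst (xs i)) / Mtilde P r M)
      in if \<exists>i<k. acc i then fst (xs (LEAST i. acc i)) else fst (xs j))"

definition brs_space :: "'a measure \<Rightarrow> nat \<Rightarrow> ((nat \<Rightarrow> 'a \<times> real) \<times> nat) measure" where
  "brs_space P k =
     (\<Pi>\<^sub>M i\<in>UNIV. (P \<Otimes>\<^sub>M uniform_measure lborel {0..1::real}))
       \<Otimes>\<^sub>M measure_pmf (pmf_of_set {..<k})"

definition brs_law :: "'a measure \<Rightarrow> ('a \<Rightarrow> real) \<Rightarrow> real \<Rightarrow> nat \<Rightarrow> 'a measure" where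
  "brs_law P r M k = distr (brs_space P k) P (brs_out P r M k)"

end

theory Submission
  imports Defs
begin

(*
  Each proposal is accepted with probability g = r_M / Mtilde = min r M / M, so the acceptance
  rate is p = W_P(M) / M = 1 / Mtilde.  Summing over the events "first acceptance at step i < k"
  gives the lower bound (1 - (1 - p)^k) Q_M(B) for the law of the output; applied to the
  complement of B it gives the upper bound (1 - (1 - p)^k) Q_M(B) + (1 - p)^k.  Hence the output
  is within (1 - p)^k <= exp (- k / Mtilde) <= (1 - gamma) epsilon of Q_M.

  Truncation costs at most E_P[(r - Mtilde)^+]: the function r - r_M has mean zero and its
  positive part is dominated by (r - Mtilde)^+, because r_M = r / W_P(M) >= r below M and
  r_M = Mtilde above.  By convexity, f(r) >= f'(Mtilde) (r - Mtilde), so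
  E_P[(r - Mtilde)^+] <= D_f(Q||P) / f'(Mtilde) = gamma epsilon.
*)

lemma emeasure_uniform_unit_le:
  fixes t :: real
  assumes "0 \<le> t" "t \<le> 1"
  shows "emeasure (uniform_measure lborel {0..1::real}) {u. u \<le> t} = ennreal t"
proof -
  have "{0..1::real} \<inter> {u. u \<le> t} = {0..t}" using assms by auto
  then show ?thesis using assms by (simp add: divide_ennreal_def)
qed

lemma measure_pair_uniform_below:
  fixes g :: "'a \<Rightarrow> real"
  assumes "finite_measure P" and g[measurable]: "g \<in> borel_measurable P"
    and g01: "\<And>x. 0 \<le> g x \<and> g x \<le> 1" and B[measurable]: "B \<in> sets P"
  shows "measure (P \<Otimes>\<^sub>M uniform_measure lborel {0..1})
           {z \<in> space (P \<Otimes>\<^sub>M uniform_measure lborel {0..1}). fst z \<in> B \<and> snd z \<le> g (fst z)}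
         = (\<integral>x. indicator B x * g x \<partial>P)"
proof -
  let ?U = "uniform_measure lborel {0..1::real}"
  let ?A = "{z \<in> space (P \<Otimes>\<^sub>M ?U). fst z \<in> B \<and> snd z \<le> g (fst z)}"
  interpret U: prob_space ?U by (intro prob_space_uniform_measure) auto
  interpret P: finite_measure P by fact
  interpret PU: finite_measure "P \<Otimes>\<^sub>M ?U" by (intro finite_measure_pair_measure) unfold_locales
  have section_eq: "emeasure ?U (Pair x -` ?A) = ennreal (indicator B x * g x)" if "x \<in> space P" for x
  proof (cases "x \<in> B")
    case True
    then have "Pair x -` ?A = {u. u \<le> g x}" using that by (auto simp: space_pair_measure)
    then show ?thesis using True g01 emeasure_uniform_unit_le by simp
  qed auto
  have "emeasure (P \<Otimes>\<^sub>M ?U) ?A = (\<integral>\<^sup>+ x. emeasure ?U (Pair x -` ?A) \<partial>P)"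
    by (rule U.emeasure_pair_measure_alt) measurable
  also have "\<dots> = (\<integral>\<^sup>+ x. ennreal (indicator B x * g x) \<partial>P)"
    by (intro nn_integral_cong section_eq)
  also have "\<dots> = ennreal (\<integral>x. indicator B x * g x \<partial>P)"
    by (intro nn_integral_eq_integral P.integrable_const_bound[where B=1])
       (use g01 in \<open>auto simp: indicator_def\<close>)
  finally show ?thesis
    using g01 by (simp add: PU.emeasure_eq_measure integral_nonneg_AE)
qed

lemma measure_pair_uniform_above:
  fixes g :: "'a \<Rightarrow> real"
  assumes "prob_space P" and g[measurable]: "g \<in> borel_measurable P"
    and g01: "\<And>x. 0 \<le> g x \<and> g x \<le> 1"
  shows "measure (P \<Otimes>\<^sub>M uniform_measure lborel {0..1})
           {z \<in> space (P \<Otimes>\<^sub>M uniform_measure lborel {0..1}). g (fst z) < snd z}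
         = 1 - (\<integral>x. g x \<partial>P)"
proof -
  let ?N = "P \<Otimes>\<^sub>M uniform_measure lborel {0..1::real}"
  interpret P: prob_space P by fact
  interpret N: prob_space ?N
    by (intro prob_space_pair P.prob_space_axioms prob_space_uniform_measure) auto
  have "space ?N - {z \<in> space ?N. g (fst z) < snd z}
          = {z \<in> space ?N. fst z \<in> space P \<and> snd z \<le> g (fst z)}"
    by (auto simp: space_pair_measure)
  then have "measure ?N (space ?N - {z \<in> space ?N. g (fst z) < snd z})
               = (\<integral>x. indicator (space P) x * g x \<partial>P)"
    by (simp add: measure_pair_uniform_below[OF P.finite_measure_axioms g g01 sets.top])
  also have "\<dots> = (\<integral>x. g x \<partial>P)"
    by (intro Bochner_Integration.integral_cong) auto
  finally have "measure ?N (space ?N - {z \<in> space ?N. g (fst z) < snd z}) = (\<integral>x. g x \<partial>P)" .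
  moreover have "{z \<in> space ?N. g (fst z) < snd z} \<in> sets ?N"
    by measurable
  ultimately show ?thesis
    using N.prob_compl by simp
qed

lemma emeasure_PiM_initial_segment:
  fixes n :: nat
  assumes "prob_space N" and A: "\<And>m. m < n \<Longrightarrow> A m \<in> sets N"
  shows "emeasure (\<Pi>\<^sub>M i\<in>UNIV. N) {xs \<in> space (\<Pi>\<^sub>M i\<in>UNIV. N). \<forall>m<n. xs m \<in> A m}
           = (\<Prod>m<n. emeasure N (A m))"
proof -
  have "{xs \<in> space (\<Pi>\<^sub>M i\<in>UNIV. N). \<forall>m<n. xs m \<in> A m}
          = prod_emb UNIV (\<lambda>_. N) {..<n} (Pi\<^sub>E {..<n} A)"
    by (auto simp: prod_emb_def PiE_iff space_PiM)
  also have "emeasure (\<Pi>\<^sub>M i\<in>UNIV. N) \<dots> = (\<Prod>m<n. emeasure N (A m))"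
    by (rule emeasure_PiM_emb) (use assms in auto)
  finally show ?thesis .
qed

lemma measure_PiM_first_hit:
  fixes k :: nat
  assumes "prob_space N" and [measurable]: "R \<in> sets N" "A \<in> sets N" and "R \<inter> A = {}"
  shows "measure (\<Pi>\<^sub>M i\<in>UNIV. N)
           {xs \<in> space (\<Pi>\<^sub>M i\<in>UNIV. N). \<exists>i<k. (\<forall>m<i. xs m \<in> R) \<and> xs i \<in> A}
         = (\<Sum>i<k. measure N R ^ i * measure N A)"
proof -
  interpret N: prob_space N by fact
  interpret Om: product_prob_space "\<lambda>_. N" "UNIV :: nat set" by unfold_locales
  let ?Om = "\<Pi>\<^sub>M n\<in>(UNIV :: nat set). N"
  define E where "E i = {xs \<in> space ?Om. (\<forall>m<i. xs m \<in> R) \<and> xs i \<in> A}" for i :: nat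
  have E_eq: "E i = {xs \<in> space ?Om. \<forall>m<Suc i. xs m \<in> (if m < i then R else A)}" for i
    unfolding E_def less_Suc_eq by force
  have E_sets: "E i \<in> sets ?Om" for i
    unfolding E_def by measurable
  have "emeasure ?Om (E i) = (\<Prod>m<Suc i. emeasure N (if m < i then R else A))" for i
    unfolding E_eq by (rule emeasure_PiM_initial_segment) (use assms in auto)
  also have "\<dots> i = ennreal (measure N R ^ i * measure N A)" for i
    by (simp add: N.emeasure_eq_measure ennreal_power ennreal_mult)
  finally have measure_E: "measure ?Om (E i) = measure N R ^ i * measure N A" for i
    by (simp add: Om.emeasure_eq_measure)
  have "disjoint_family_on E {..<k}"
    unfolding disjoint_family_on_def
  proof (intro ballI impI)
    fix i j :: nat assume "i \<noteq> j"
    then consider "i < j" | "j < i" by linarith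
    then show "E i \<inter> E j = {}" using assms(4) unfolding E_def by cases blast+
  qed
  moreover have "{xs \<in> space ?Om. \<exists>i<k. (\<forall>m<i. xs m \<in> R) \<and> xs i \<in> A} = (\<Union>i<k. E i)"
    unfolding E_def by blast
  ultimately show ?thesis
    using E_sets by (simp add: measure_finite_Union image_subset_iff measure_E)
qed

definition rejection_sample :: "('a \<Rightarrow> real) \<Rightarrow> nat \<Rightarrow> (nat \<Rightarrow> 'a \<times> real) \<times> nat \<Rightarrow> 'a" where
  "rejection_sample g k \<omega> =
     (let xs = fst \<omega>; accepted = (\<lambda>i. snd (xs i) \<le> g (fst (xs i)))
      in if \<exists>i<k. accepted i then fst (xs (LEAST i. accepted i)) else fst (xs (snd \<omega>)))"

lemma rejection_sample_eq_first_accepted: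
  assumes "i < k" and "snd (xs i) \<le> g (fst (xs i))"
    and "\<And>m. m < i \<Longrightarrow> g (fst (xs m)) < snd (xs m)"
  shows "rejection_sample g k (xs, j) = fst (xs i)"
proof -
  have "(LEAST i. snd (xs i) \<le> g (fst (xs i))) = i"
    using assms by (intro Least_equality) (auto simp: not_less[symmetric])
  then show ?thesis
    using assms unfolding rejection_sample_def Let_def by auto
qed

lemma measurable_rejection_sample[measurable]:
  assumes [measurable]: "g \<in> borel_measurable P"
  shows "rejection_sample g k \<in> brs_space P k \<rightarrow>\<^sub>M P"
proof -
  let ?S = "brs_space P k"
  have sample[measurable]: "(\<lambda>\<omega>. fst (fst \<omega> i)) \<in> ?S \<rightarrow>\<^sub>M P" for i
    unfolding brs_space_def by measurable
  have [measurable]: "(\<lambda>\<omega>. snd (fst \<omega> i)) \<in> ?S \<rightarrow>\<^sub>M borel" for i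
    unfolding brs_space_def by measurable
  have [measurable]: "snd \<in> ?S \<rightarrow>\<^sub>M count_space UNIV"
    using measurable_snd[of _ "measure_pmf (pmf_of_set {..<k})"]
    unfolding brs_space_def by (simp cong: measurable_cong_sets)
  have "(\<lambda>\<omega>. LEAST i. snd (fst \<omega> i) \<le> g (fst (fst \<omega> i))) \<in> ?S \<rightarrow>\<^sub>M count_space UNIV"
    by measurable
  then have "(\<lambda>\<omega>. fst (fst \<omega> (LEAST i. snd (fst \<omega> i) \<le> g (fst (fst \<omega> i))))) \<in> ?S \<rightarrow>\<^sub>M P"
    by (rule measurable_compose_countable[OF sample])
  moreover have "(\<lambda>\<omega>. fst (fst \<omega> (snd \<omega>))) \<in> ?S \<rightarrow>\<^sub>M P"
    by (rule measurable_compose_countable[OF sample]) measurable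
  moreover have "{\<omega> \<in> space ?S. \<exists>i<k. snd (fst \<omega> i) \<le> g (fst (fst \<omega> i))} \<in> sets ?S"
    by measurable
  ultimately show ?thesis
    unfolding rejection_sample_def Let_def by (rule measurable_If)
qed

lemma prob_space_brs_space: "prob_space P \<Longrightarrow> prob_space (brs_space P k)"
  unfolding brs_space_def
  by (intro prob_space_pair prob_space_PiM prob_space_measure_pmf prob_space_uniform_measure) auto

lemma measure_brs_space_fst:
  assumes "H \<in> sets (\<Pi>\<^sub>M i\<in>UNIV. P \<Otimes>\<^sub>M uniform_measure lborel {0..1})"
  shows "measure (brs_space P k) (fst -` H \<inter> space (brs_space P k))
           = measure (\<Pi>\<^sub>M i\<in>UNIV. P \<Otimes>\<^sub>M uniform_measure lborel {0..1}) H"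
proof -
  have "measure (brs_space P k) (fst -` H \<inter> space (brs_space P k))
          = measure (distr (brs_space P k) (\<Pi>\<^sub>M i\<in>UNIV. P \<Otimes>\<^sub>M uniform_measure lborel {0..1}) fst) H"
    unfolding brs_space_def by (rule measure_distr[symmetric, OF measurable_fst assms])
  then show ?thesis
    unfolding brs_space_def by (simp add: measure_pmf.distr_pair_fst)
qed

lemma rejection_sample_lower_bound:
  fixes g :: "'a \<Rightarrow> real"
  assumes "prob_space P" and g[measurable]: "g \<in> borel_measurable P"
    and g01: "\<And>x. 0 \<le> g x \<and> g x \<le> 1" and B[measurable]: "B \<in> sets P"
  shows "(\<Sum>i<k. (1 - (\<integral>x. g x \<partial>P)) ^ i * (\<integral>x. indicator B x * g x \<partial>P))
           \<le> measure (distr (brs_space P k) P (rejection_sample g k)) B"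
proof -
  interpret P: prob_space P by fact
  define N where "N = P \<Otimes>\<^sub>M uniform_measure lborel {0..1::real}"
  define S where "S = brs_space P k"
  define R where "R = {z \<in> space N. g (fst z) < snd z}"
  define A where "A = {z \<in> space N. fst z \<in> B \<and> snd z \<le> g (fst z)}"
  define H where "H = {xs \<in> space (\<Pi>\<^sub>M i\<in>UNIV. N). \<exists>i<k. (\<forall>m<i. xs m \<in> R) \<and> xs i \<in> A}"
  interpret S: prob_space S
    unfolding S_def by (rule prob_space_brs_space) fact
  interpret N: prob_space N unfolding N_def
    by (intro prob_space_pair P.prob_space_axioms prob_space_uniform_measure) auto
  have sets_RA[measurable]: "R \<in> sets N" "A \<in> sets N"
    unfolding R_def A_def N_def by measurable
  have H_sets: "H \<in> sets (\<Pi>\<^sub>M i\<in>UNIV. N)"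
    unfolding H_def by measurable
  have "measure N R = 1 - (\<integral>x. g x \<partial>P)"
    unfolding R_def N_def by (rule measure_pair_uniform_above) (use assms in auto)
  moreover have "measure N A = (\<integral>x. indicator B x * g x \<partial>P)"
    unfolding A_def N_def by (rule measure_pair_uniform_below) (use g01 in auto)
  ultimately have "(\<Sum>i<k. (1 - (\<integral>x. g x \<partial>P)) ^ i * (\<integral>x. indicator B x * g x \<partial>P))
          = measure (\<Pi>\<^sub>M i\<in>UNIV. N) H"
    using measure_PiM_first_hit[OF N.prob_space_axioms sets_RA, of k] unfolding H_def
    by (simp add: R_def A_def disjoint_iff)
  also have "\<dots> = measure S (fst -` H \<inter> space S)"
    using measure_brs_space_fst[of H P k] H_sets unfolding S_def N_def by simp
  also have "\<dots> \<le> measure S (rejection_sample g k -` B \<inter> space S)"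
  proof (rule S.finite_measure_mono)
    show "fst -` H \<inter> space S \<subseteq> rejection_sample g k -` B \<inter> space S"
    proof
      fix \<omega> assume \<omega>: "\<omega> \<in> fst -` H \<inter> space S"
      then obtain i where i: "i < k" "\<forall>m<i. fst \<omega> m \<in> R" "fst \<omega> i \<in> A"
        unfolding H_def by blast
      then have "rejection_sample g k (fst \<omega>, snd \<omega>) = fst (fst \<omega> i)"
        by (intro rejection_sample_eq_first_accepted) (auto simp: R_def A_def)
      moreover have "fst (fst \<omega> i) \<in> B"
        using i by (simp add: A_def)
      ultimately show "\<omega> \<in> rejection_sample g k -` B \<inter> space S"
        using \<omega> by simp
    qed
    show "rejection_sample g k -` B \<inter> space S \<in> sets S"
      unfolding S_def by measurable
  qed
  also have "\<dots> = measure (distr (brs_space P k) P (rejection_sample g k)) B"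
    unfolding S_def by (rule measure_distr[symmetric]) measurable
  finally show ?thesis .
qed

lemma rejection_sample_upper_bound:
  fixes g :: "'a \<Rightarrow> real"
  assumes "prob_space P" and g[measurable]: "g \<in> borel_measurable P"
    and g01: "\<And>x. 0 \<le> g x \<and> g x \<le> 1" and B[measurable]: "B \<in> sets P"
  shows "measure (distr (brs_space P k) P (rejection_sample g k)) B
           \<le> (\<Sum>i<k. (1 - (\<integral>x. g x \<partial>P)) ^ i * (\<integral>x. indicator B x * g x \<partial>P))
             + (1 - (\<integral>x. g x \<partial>P)) ^ k"
proof -
  interpret P: prob_space P by fact
  define p where "p = (\<integral>x. g x \<partial>P)"
  define G where "G C = (\<integral>x. indicator C x * g x \<partial>P)" for C
  let ?D = "distr (brs_space P k) P (rejection_sample g k)"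
  interpret D: prob_space ?D
    by (intro prob_space.prob_space_distr prob_space_brs_space assms measurable_rejection_sample g)
  have integrable: "integrable P (\<lambda>x. indicator C x * g x)" if "C \<in> sets P" for C
    by (rule P.integrable_const_bound[where B=1]) (use g01 that in \<open>auto simp: indicator_def\<close>)
  have "G B + G (space P - B) = (\<integral>x. indicator B x * g x + indicator (space P - B) x * g x \<partial>P)"
    unfolding G_def by (rule Bochner_Integration.integral_add[symmetric]) (auto intro: integrable)
  also have "\<dots> = p"
    unfolding p_def by (intro Bochner_Integration.integral_cong) (auto simp: indicator_def)
  finally have split: "G (space P - B) = p - G B"
    by simp
  have geometric: "(\<Sum>i<k. (1 - p) ^ i) * p = 1 - (1 - p) ^ k"
    using one_diff_power_eq[of "1 - p" k] by simp
  have "measure ?D B = 1 - measure ?D (space P - B)"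
    using D.prob_compl[of B] by simp
  also have "\<dots> \<le> 1 - (\<Sum>i<k. (1 - p) ^ i * G (space P - B))"
    using rejection_sample_lower_bound[OF assms(1-3), of "space P - B" k]
    unfolding p_def G_def by simp
  also have "\<dots> = 1 - (\<Sum>i<k. (1 - p) ^ i) * (p - G B)"
    by (simp add: split sum_distrib_right)
  also have "\<dots> = (\<Sum>i<k. (1 - p) ^ i * G B) + (1 - p) ^ k"
    using geometric by (simp add: right_diff_distrib sum_distrib_right)
  finally show ?thesis
    unfolding p_def G_def .
qed

lemma measure_density_eq_integral:
  fixes r :: "'a \<Rightarrow> real"
  assumes [measurable]: "r \<in> borel_measurable P" and "\<And>x. 0 \<le> r x" and "B \<in> sets P"
  shows "measure (density P (\<lambda>x. ennreal (r x))) B = (\<integral>x. indicator B x * r x \<partial>P)"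
proof -
  have "measure (density P (\<lambda>x. ennreal (r x))) B = (\<integral>x. indicator B x \<partial>density P (\<lambda>x. ennreal (r x)))"
    using assms(3) by (simp add: Int_absorb2 sets.sets_into_space)
  also have "\<dots> = (\<integral>x. indicator B x * r x \<partial>P)"
    using assms by (subst integral_density) (auto simp: mult.commute)
  finally show ?thesis .
qed

lemma integrable_density_of_prob_space:
  fixes r :: "'a \<Rightarrow> real"
  assumes "prob_space (density P (\<lambda>x. ennreal (r x)))"
    and [measurable]: "r \<in> borel_measurable P" and "\<And>x. 0 \<le> r x"
  shows "integrable P r" and "(\<integral>x. r x \<partial>P) = 1"
proof -
  interpret Q: prob_space "density P (\<lambda>x. ennreal (r x))" by fact
  show "integrable P r"
    using integrable_density[of "\<lambda>_. 1 :: real" P r] assms by simp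
  have "(\<integral>x. r x \<partial>P) = (\<integral>x. indicator (space P) x * r x \<partial>P)"
    by (intro Bochner_Integration.integral_cong) auto
  also have "\<dots> = measure (density P (\<lambda>x. ennreal (r x))) (space P)"
    using measure_density_eq_integral[of r P "space P"] assms by simp
  finally show "(\<integral>x. r x \<partial>P) = 1"
    using Q.prob_space by simp
qed

lemma Wfun_bounds:
  fixes r :: "'a \<Rightarrow> real"
  assumes "prob_space P" and "integrable P r" and "(\<integral>x. r x \<partial>P) = 1"
    and r_nonneg: "\<And>x. 0 \<le> r x" and "0 < M"
  shows "0 < Wfun P r M" and "Wfun P r M \<le> 1" and "Wfun P r M \<le> M"
proof -
  interpret P: prob_space P by fact
  have min_int: "integrable P (\<lambda>x. min (r x) M)"
    using assms by (intro P.integrable_const_bound[where B=M]) auto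
  show "Wfun P r M \<le> 1"
    using integral_mono[OF min_int \<open>integrable P r\<close>] assms(3) unfolding Wfun_def by simp
  show "Wfun P r M \<le> M"
    using integral_mono[OF min_int P.integrable_const, of M] unfolding Wfun_def
    by (simp add: P.prob_space)
  show "0 < Wfun P r M"
  proof (rule ccontr)
    assume "\<not> 0 < Wfun P r M"
    moreover have "0 \<le> Wfun P r M"
      unfolding Wfun_def using assms by (intro integral_nonneg_AE) auto
    ultimately have "AE x in P. min (r x) M = 0"
      using integral_nonneg_eq_0_iff_AE[OF min_int] r_nonneg \<open>0 < M\<close> unfolding Wfun_def by simp
    then have "AE x in P. r x = 0"
      by eventually_elim (use \<open>0 < M\<close> in \<open>auto simp: min_def split: if_splits\<close>)
    then have "(\<integral>x. r x \<partial>P) = 0"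
      by (simp add: integral_eq_zero_AE)
    then show False
      using assms(3) by simp
  qed
qed

lemma one_le_Mtilde:
  fixes r :: "'a \<Rightarrow> real"
  assumes "prob_space P" and "integrable P r" and "(\<integral>x. r x \<partial>P) = 1"
    and "\<And>x. 0 \<le> r x" and "0 < M"
  shows "1 \<le> Mtilde P r M"
  using Wfun_bounds[OF assms] by (simp add: Mtilde_def)

lemma borel_measurable_rM[measurable]:
  "r \<in> borel_measurable P \<Longrightarrow> rM P r M \<in> borel_measurable P"
  unfolding rM_def by (intro borel_measurable_divide borel_measurable_min) auto

lemma integrable_rM:
  fixes r :: "'a \<Rightarrow> real"
  assumes "finite_measure P" and [measurable]: "r \<in> borel_measurable P"
    and "\<And>x. 0 \<le> r x" and "0 < M"
  shows "integrable P (rM P r M)"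
  unfolding rM_def using assms
  by (intro integrable_divide finite_measure.integrable_const_bound[where B=M]) auto

lemma prob_space_truncated_density:
  fixes r :: "'a \<Rightarrow> real"
  assumes "prob_space P" and [measurable]: "r \<in> borel_measurable P"
    and r_nonneg: "\<And>x. 0 \<le> r x" and "0 < M" and "0 < Wfun P r M"
  shows "prob_space (density P (\<lambda>x. ennreal (rM P r M x)))"
proof (rule prob_spaceI)
  interpret P: prob_space P by fact
  have rM_int: "integrable P (rM P r M)"
    using assms by (intro integrable_rM P.finite_measure_axioms) auto
  have "emeasure (density P (\<lambda>x. ennreal (rM P r M x))) (space P)
          = (\<integral>\<^sup>+ x. ennreal (rM P r M x) \<partial>P)"
    by (subst emeasure_density) (auto simp: rM_def intro!: nn_integral_cong)
  also have "\<dots> = ennreal (\<integral>x. rM P r M x \<partial>P)"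
    using assms by (intro nn_integral_eq_integral rM_int) (auto simp: rM_def)
  also have "(\<integral>x. rM P r M x \<partial>P) = 1"
    using assms unfolding rM_def Wfun_def by simp
  finally show "emeasure (density P (\<lambda>x. ennreal (rM P r M x)))
                  (space (density P (\<lambda>x. ennreal (rM P r M x)))) = 1"
    by simp
qed

lemma abs_set_integral_le_integral_pos_part:
  fixes h :: "'a \<Rightarrow> real"
  assumes "integrable P h" and "(\<integral>x. h x \<partial>P) = 0" and "B \<in> sets P"
  shows "\<bar>\<integral>x. indicator B x * h x \<partial>P\<bar> \<le> (\<integral>x. max (h x) 0 \<partial>P)"
proof -
  have int_B: "integrable P (\<lambda>x. indicator B x * h x)"
    using integrable_real_mult_indicator[OF assms(3,1)] by (simp add: mult.commute)
  have int_pos: "integrable P (\<lambda>x. max (h x) 0)"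
    using assms(1) by auto
  have "(\<integral>x. indicator B x * h x \<partial>P) \<le> (\<integral>x. max (h x) 0 \<partial>P)"
    by (rule integral_mono[OF int_B int_pos]) (auto simp: indicator_def)
  moreover have "(\<integral>x. - (indicator B x * h x) \<partial>P) \<le> (\<integral>x. max (h x) 0 - h x \<partial>P)"
    by (rule integral_mono) (use int_B int_pos assms(1) in \<open>auto simp: indicator_def\<close>)
  ultimately show ?thesis
    using assms(2) Bochner_Integration.integral_diff[OF int_pos assms(1)] by simp
qed

lemma pos_part_truncation_le:
  fixes r :: "'a \<Rightarrow> real"
  assumes "0 < Wfun P r M" "Wfun P r M \<le> 1" and "0 < M" and "0 \<le> r x"
  shows "max (r x - rM P r M x) 0 \<le> max (r x - Mtilde P r M) 0"
proof (cases "r x \<le> M")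
  case True
  then have "r x \<le> rM P r M x"
    using assms by (simp add: rM_def le_divide_eq mult_left_le)
  then show ?thesis by simp
qed (simp add: rM_def Mtilde_def)

lemma truncation_error_le_excess:
  fixes r :: "'a \<Rightarrow> real"
  assumes "prob_space P" and Q: "prob_space (density P (\<lambda>x. ennreal (r x)))"
    and r_meas[measurable]: "r \<in> borel_measurable P" and r_nonneg: "\<And>x. 0 \<le> r x"
    and "0 < M" and B: "B \<in> sets P"
  shows "\<bar>measure (density P (\<lambda>x. ennreal (r x))) B
            - measure (density P (\<lambda>x. ennreal (rM P r M x))) B\<bar>
         \<le> (\<integral>x. max (r x - Mtilde P r M) 0 \<partial>P)"
proof -
  interpret P: prob_space P by fact
  have r_int: "integrable P r" and r_one: "(\<integral>x. r x \<partial>P) = 1"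
    using integrable_density_of_prob_space[OF Q r_meas r_nonneg] by auto
  note W = Wfun_bounds[OF assms(1) r_int r_one r_nonneg \<open>0 < M\<close>]
  have rM_nonneg: "0 \<le> rM P r M x" for x
    using W r_nonneg[of x] \<open>0 < M\<close> by (simp add: rM_def)
  have rM_int: "integrable P (rM P r M)"
    using assms by (intro integrable_rM P.finite_measure_axioms) auto
  define h where "h x = r x - rM P r M x" for x
  have h_int: "integrable P h"
    unfolding h_def using r_int rM_int by auto
  have "measure (density P (\<lambda>x. ennreal (r x))) B - measure (density P (\<lambda>x. ennreal (rM P r M x))) B
          = (\<integral>x. indicator B x * h x \<partial>P)"
    using integrable_real_mult_indicator[OF B r_int] integrable_real_mult_indicator[OF B rM_int]
    by (simp add: measure_density_eq_integral B r_nonneg rM_nonneg h_def right_diff_distrib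
        mult.commute)
  also have "\<bar>\<dots>\<bar> \<le> (\<integral>x. max (h x) 0 \<partial>P)"
  proof (rule abs_set_integral_le_integral_pos_part[OF h_int _ B])
    show "(\<integral>x. h x \<partial>P) = 0"
      unfolding h_def using r_int r_one rM_int W by (simp add: rM_def Wfun_def)
  qed
  also have "\<dots> \<le> (\<integral>x. max (r x - Mtilde P r M) 0 \<partial>P)"
    using h_int r_nonneg rM_nonneg W \<open>0 < M\<close> unfolding h_def
    by (intro integral_mono pos_part_truncation_le Bochner_Integration.integrable_bound[OF r_int])
       (auto simp: Mtilde_def)
  finally show ?thesis .
qed

lemma brs_law_bounds:
  fixes r :: "'a \<Rightarrow> real"
  assumes "prob_space P" and [measurable]: "r \<in> borel_measurable P"
    and r_nonneg: "\<And>x. 0 \<le> r x" and "0 < M" and W_pos: "0 < Wfun P r M" and B: "B \<in> sets P"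
  defines "a \<equiv> 1 - 1 / Mtilde P r M"
    and "QM \<equiv> density P (\<lambda>x. ennreal (rM P r M x))"
  shows "(1 - a ^ k) * measure QM B \<le> measure (brs_law P r M k) B"
    and "measure (brs_law P r M k) B \<le> (1 - a ^ k) * measure QM B + a ^ k"
proof -
  interpret P: prob_space P by fact
  define g where "g x = min (r x) M / M" for x
  have g_meas[measurable]: "g \<in> borel_measurable P"
    unfolding g_def by measurable
  have g01: "0 \<le> g x \<and> g x \<le> 1" for x
    using r_nonneg[of x] \<open>0 < M\<close> by (auto simp: g_def)
  have g_eq: "g x = (1 - a) * rM P r M x" for x
    using W_pos \<open>0 < M\<close> by (simp add: g_def a_def rM_def Mtilde_def)
  have "rM P r M x / Mtilde P r M = g x" for x
    using W_pos \<open>0 < M\<close> by (simp add: rM_def Mtilde_def g_def)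
  then have law: "brs_law P r M k = distr (brs_space P k) P (rejection_sample g k)"
    unfolding brs_law_def brs_out_def rejection_sample_def by presburger
  have accept: "(\<integral>x. g x \<partial>P) = 1 - a"
    using W_pos \<open>0 < M\<close> by (simp add: g_def a_def Mtilde_def Wfun_def)
  have "0 \<le> rM P r M x" for x
    using W_pos r_nonneg[of x] \<open>0 < M\<close> by (simp add: rM_def)
  then have "measure QM B = (\<integral>x. indicator B x * rM P r M x \<partial>P)"
    unfolding QM_def by (intro measure_density_eq_integral B) auto
  then have accept_B: "(\<integral>x. indicator B x * g x \<partial>P) = (1 - a) * measure QM B"
    by (simp add: g_eq mult.left_commute)
  have geometric: "(\<Sum>i<k. a ^ i * ((1 - a) * measure QM B)) = (1 - a ^ k) * measure QM B"
    by (simp add: one_diff_power_eq[of a k] sum_distrib_left sum_distrib_right mult_ac)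
  show "(1 - a ^ k) * measure QM B \<le> measure (brs_law P r M k) B"
    and "measure (brs_law P r M k) B \<le> (1 - a ^ k) * measure QM B + a ^ k"
    using rejection_sample_lower_bound[OF assms(1) g_meas g01 B, of k]
      rejection_sample_upper_bound[OF assms(1) g_meas g01 B, of k]
    unfolding law accept accept_B by (simp_all add: geometric)
qed

lemma brs_law_error_le:
  fixes r :: "'a \<Rightarrow> real"
  assumes "prob_space P" and Q: "prob_space (density P (\<lambda>x. ennreal (r x)))"
    and r_meas: "r \<in> borel_measurable P" and r_nonneg: "\<And>x. 0 \<le> r x"
    and "0 < M" and B: "B \<in> sets P"
  shows "\<bar>measure (brs_law P r M k) B - measure (density P (\<lambda>x. ennreal (r x))) B\<bar>
           \<le> (1 - 1 / Mtilde P r M) ^ k + (\<integral>x. max (r x - Mtilde P r M) 0 \<partial>P)"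
proof -
  let ?QM = "density P (\<lambda>x. ennreal (rM P r M x))"
  let ?a = "1 - 1 / Mtilde P r M"
  have r_int: "integrable P r" and r_one: "(\<integral>x. r x \<partial>P) = 1"
    using integrable_density_of_prob_space[OF Q r_meas r_nonneg] by auto
  have W_pos: "0 < Wfun P r M"
    using Wfun_bounds[OF assms(1) r_int r_one r_nonneg \<open>0 < M\<close>] by simp
  interpret QM: prob_space ?QM
    by (rule prob_space_truncated_density[OF assms(1) r_meas r_nonneg \<open>0 < M\<close> W_pos])
  have "0 \<le> ?a"
    using one_le_Mtilde[OF assms(1) r_int r_one r_nonneg \<open>0 < M\<close>] by simp
  then have "0 \<le> ?a ^ k * measure ?QM B" "?a ^ k * measure ?QM B \<le> ?a ^ k"
    by (simp_all add: mult_left_le)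
  then show ?thesis
    using brs_law_bounds[OF assms(1) r_meas r_nonneg \<open>0 < M\<close> W_pos B, of k]
      truncation_error_le_excess[OF assms]
    unfolding abs_le_iff left_diff_distrib by linarith
qed

lemma ext_convex_nonneg_imp_convex_on:
  fixes f :: "real \<Rightarrow> ereal"
  assumes convex: "ext_convex_nonneg f"
    and nonneg: "\<And>x. 0 \<le> x \<Longrightarrow> 0 \<le> f x" and finite: "\<And>x. 0 < x \<Longrightarrow> f x \<noteq> \<infinity>"
  shows "convex_on {0<..} (\<lambda>t. real_of_ereal (f t))"
proof (rule convex_onI)
  have real: "\<exists>u. f x = ereal u" if "0 < x" for x
    using nonneg[of x] finite[of x] that by (cases "f x") auto
  fix t x y :: real assume t: "0 < t" "t < 1" and xy: "x \<in> {0<..}" "y \<in> {0<..}"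
  then have "0 < (1 - t) * x + t * y"
    by (auto intro: add_pos_pos)
  with real xy obtain u v w where
    "f x = ereal u" "f y = ereal v" "f ((1 - t) * x + t * y) = ereal w"
    by (metis greaterThan_iff)
  moreover have "f ((1 - t) * x + t * y) \<le> ereal (1 - t) * f x + ereal t * f y"
    using convex t xy unfolding ext_convex_nonneg_def by auto
  ultimately show "real_of_ereal (f ((1 - t) *\<^sub>R x + t *\<^sub>R y))
                     \<le> (1 - t) * real_of_ereal (f x) + t * real_of_ereal (f y)"
    by simp
qed (rule convex_real_interval)

lemma above_tangent_pos_part:
  fixes f :: "real \<Rightarrow> ereal"
  assumes convex: "ext_convex_nonneg f"
    and nonneg: "\<And>x. 0 \<le> x \<Longrightarrow> 0 \<le> f x" and finite: "\<And>x. 0 < x \<Longrightarrow> f x \<noteq> \<infinity>"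
    and deriv: "((\<lambda>t. real_of_ereal (f t)) has_real_derivative c) (at t)"
    and "0 < t" "0 \<le> c" "0 \<le> y"
  shows "c * max (y - t) 0 \<le> real_of_ereal (f y)"
proof (cases "y \<le> t")
  case True
  then show ?thesis
    using nonneg[OF \<open>0 \<le> y\<close>] by (simp add: real_of_ereal_pos)
next
  case False
  have "c * (y - t) \<le> real_of_ereal (f y) - real_of_ereal (f t)"
    using \<open>0 < t\<close> False deriv
    by (intro convex_on_imp_above_tangent[OF ext_convex_nonneg_imp_convex_on[OF convex nonneg finite]])
       (auto simp: interior_open intro: convex_connected has_field_derivative_at_within)
  moreover have "0 \<le> real_of_ereal (f t)"
    using nonneg[of t] \<open>0 < t\<close> by (simp add: real_of_ereal_pos)
  ultimately show ?thesis
    using False by simp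
qed

lemma excess_mass_le_fdiv:
  fixes f :: "real \<Rightarrow> ereal" and r :: "'a \<Rightarrow> real"
  assumes convex: "ext_convex_nonneg f"
    and nonneg: "\<And>x. 0 \<le> x \<Longrightarrow> 0 \<le> f x" and finite: "\<And>x. 0 < x \<Longrightarrow> f x \<noteq> \<infinity>"
    and deriv: "((\<lambda>t. real_of_ereal (f t)) has_real_derivative enn2real (fdiv P f r) / \<delta>) (at t)"
    and "0 < t" "0 < \<delta>"
    and r_int: "integrable P r" and r_nonneg: "\<And>x. 0 \<le> r x"
    and D_pos: "0 < fdiv P f r" and D_fin: "fdiv P f r < \<infinity>"
  shows "(\<integral>x. max (r x - t) 0 \<partial>P) \<le> \<delta>"
proof -
  define c where "c = enn2real (fdiv P f r) / \<delta>"
  have "0 < c"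
    using D_pos D_fin \<open>0 < \<delta>\<close> by (simp add: c_def enn2real_positive_iff)
  have pointwise: "ennreal (c * max (r x - t) 0) \<le> e2ennreal (f (r x))" for x
  proof (cases "r x = 0")
    case False
    then have "f (r x) = ereal (real_of_ereal (f (r x)))"
      using nonneg[of "r x"] finite[of "r x"] r_nonneg[of x] by (simp add: ereal_real)
    then show ?thesis
      using above_tangent_pos_part[OF convex nonneg finite deriv[folded c_def] \<open>0 < t\<close>]
        \<open>0 < c\<close> r_nonneg by (metis e2ennreal_ereal ennreal_leI less_imp_le)
  qed (use \<open>0 < t\<close> in simp)
  have [measurable]: "r \<in> borel_measurable P"
    using r_int by (rule borel_measurable_integrable)
  have excess_int: "integrable P (\<lambda>x. c * max (r x - t) 0)"
    by (intro integrable_mult_right Bochner_Integration.integrable_bound[OF r_int])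
       (use r_nonneg \<open>0 < t\<close> in auto)
  have "ennreal (c * (\<integral>x. max (r x - t) 0 \<partial>P)) = (\<integral>\<^sup>+ x. ennreal (c * max (r x - t) 0) \<partial>P)"
    using nn_integral_eq_integral[OF excess_int] \<open>0 < c\<close> by simp
  also have "\<dots> \<le> fdiv P f r"
    unfolding fdiv_def by (intro nn_integral_mono pointwise)
  finally have "c * (\<integral>x. max (r x - t) 0 \<partial>P) \<le> c * \<delta>"
    using D_fin \<open>0 < c\<close> \<open>0 < \<delta>\<close> enn2real_mono[of "ennreal (c * (\<integral>x. max (r x - t) 0 \<partial>P))"]
    by (simp add: c_def integral_nonneg_AE)
  then show ?thesis
    using \<open>0 < c\<close> by simp
qed

lemma one_minus_power_le:
  fixes p \<delta> :: real
  assumes "0 \<le> p" "p \<le> 1" "0 < \<delta>" "ln (1 / \<delta>) \<le> k * p"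
  shows "(1 - p) ^ k \<le> \<delta>"
proof -
  have "(1 - p) ^ k \<le> exp (- p) ^ k"
    using assms exp_ge_add_one_self[of "- p"] by (intro power_mono) auto
  also have "\<dots> = exp (- (k * p))"
    by (simp add: exp_of_nat_mult[symmetric])
  also have "\<dots> \<le> exp (ln \<delta>)"
    using assms by (intro exp_mono) (simp add: ln_div)
  finally show ?thesis
    using assms by simp
qed

lemma tv_dist_le:
  assumes "\<And>B. B \<in> sets P \<Longrightarrow> \<bar>measure Q B - measure P B\<bar> \<le> \<epsilon>"
  shows "tv_dist Q P \<le> \<epsilon>"
  unfolding tv_dist_def by (rule cSUP_least) (use assms sets.empty_sets in blast)+

theorem mainTheorem2:
  fixes P Q :: "'a::polish_space measure"
    and r :: "'a \<Rightarrow> real"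
    and f :: "real \<Rightarrow> ereal"
    and \<epsilon> \<gamma> M :: real
    and k :: nat
  assumes P_prob: "prob_space P" and Q_prob: "prob_space Q"
    and P_sets: "sets P = sets borel" and Q_sets: "sets Q = sets borel"
    and r_meas: "r \<in> borel_measurable P" and r_nonneg: "\<And>x. 0 \<le> r x"
    and r_dens: "Q = density P (\<lambda>x. ennreal (r x))"
    and f_convex: "ext_convex_nonneg f"
    and f_nonneg: "\<And>x. 0 \<le> x \<Longrightarrow> 0 \<le> f x"
    and f_finite: "\<And>x. 0 < x \<Longrightarrow> f x \<noteq> \<infinity>"
    and f_diff: "\<And>x. 0 < x \<Longrightarrow> (\<lambda>t. real_of_ereal (f t)) differentiable (at x)"
    and f_one: "f 1 = 0"
    and f'_one: "((\<lambda>t. real_of_ereal (f t)) has_real_derivative 0) (at 1)"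
    and D_pos: "0 < fdiv P f r" and D_fin: "fdiv P f r < \<infinity>"
    and eps_pos: "0 < \<epsilon>"
    and gamma: "0 < \<gamma>" "\<gamma> < 1"
    and M_pos: "0 < M"
    and M_deriv: "((\<lambda>t. real_of_ereal (f t)) has_real_derivative
                     (enn2real (fdiv P f r) / (\<gamma> * \<epsilon>))) (at (Mtilde P r M))"
    and k_pos: "0 < k"
    and k_bound: "real k \<ge> Mtilde P r M * ln (1 / ((1 - \<gamma>) * \<epsilon>))"
  shows "tv_dist (brs_law P r M k) Q \<le> \<epsilon>"
proof -
  \<comment> \<open>Of the hypotheses on f only convexity, nonnegativity, finiteness and the value of f' at
      Mtilde are needed.\<close>
  have Q_dens: "prob_space (density P (\<lambda>x. ennreal (r x)))"
    using Q_prob r_dens by simp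
  have r_int: "integrable P r" and r_one: "(\<integral>x. r x \<partial>P) = 1"
    using integrable_density_of_prob_space[OF Q_dens r_meas r_nonneg] by auto
  have "1 \<le> Mtilde P r M"
    by (rule one_le_Mtilde[OF P_prob r_int r_one r_nonneg M_pos])
  then have budget: "(1 - 1 / Mtilde P r M) ^ k \<le> (1 - \<gamma>) * \<epsilon>"
    using k_bound gamma eps_pos by (intro one_minus_power_le) (auto simp: field_simps)
  have excess: "(\<integral>x. max (r x - Mtilde P r M) 0 \<partial>P) \<le> \<gamma> * \<epsilon>"
    using \<open>1 \<le> Mtilde P r M\<close> gamma eps_pos
    by (intro excess_mass_le_fdiv[OF f_convex f_nonneg f_finite M_deriv] r_int r_nonneg D_pos D_fin)
       auto
  have "\<bar>measure (brs_law P r M k) B - measure Q B\<bar> \<le> \<epsilon>" if "B \<in> sets P" for B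
    using brs_law_error_le[OF P_prob Q_dens r_meas r_nonneg M_pos that, of k] budget excess
    unfolding r_dens left_diff_distrib by linarith
  then show ?thesis
    using P_sets Q_sets by (intro tv_dist_le) auto
qed

end
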